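(* Let $\mathcal{W}$ be a finite set and $\Delta<0.5$. If $\mathbf{P}_1=(P_{1,w})_{w\in\mathcal{W}}$ and $\mathbf{P}_2=(P_{2,w})_{w\in\mathcal{W}}$ are probability vectors with $\max_wP_{1,w}\le1-\Delta$ and $\max_wP_{2,w}\le1-\Delta$, then $$\sum_{w\in\mathcal{W}}\sum_{j\in\mathcal{W}}(P_{1,w}\wedge P_{2,j})(1-P_{1,w})(1-P_{2,j})\ \ge\ \Delta(1-\Delta)^2+3\Delta^2(1-\Delta).$$
   Context: $a\wedge b=\min(a,b)$. *)

theory Defs
  imports Main "HOL-Analysis.Analysis"
begin

end

theory Submission
  imports Defs
begin

text \<open>For fixed \<open>y \<in> [0,1]\<close> the summand \<open>x \<mapsto> min x y * (1 - x) * (1 - y)\<close> is concave on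
  \<open>[0,1]\<close> and vanishes at \<open>0\<close>. For such a function \<open>g\<close> and a probability vector with entries
  at most \<open>1 - \<Delta>\<close>, the sum \<open>\<Sum>\<^sub>w g(P\<^sub>w)\<close> is at least its value \<open>g(\<Delta>) + g(1 - \<Delta>)\<close> at
  the two-point vector \<open>(\<Delta>, 1 - \<Delta>)\<close>: \<open>g\<close> dominates the concave piecewise linear function
  interpolating it at \<open>0, \<Delta>, 1 - \<Delta>\<close>, whose sum only depends on \<open>\<Sum>\<^sub>w min P\<^sub>w \<Delta>\<close>, and this
  quantity is at least \<open>2\<Delta>\<close>. Applying this bound once in each variable of the double sum
  leaves four explicit terms.\<close>

lemma min_sum_le_sum_min:
  fixes f :: "'a \<Rightarrow> real"
  assumes "finite A" "\<forall>x\<in>A. 0 \<le> f x" "0 \<le> d"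
  shows "min (sum f A) d \<le> (\<Sum>x\<in>A. min (f x) d)"
  using assms
proof (induction A rule: finite_induct)
  case (insert x F)
  have "0 \<le> sum f F" "0 \<le> f x"
    using insert by (auto intro: sum_nonneg)
  then have "min (f x + sum f F) d \<le> min (f x) d + min (sum f F) d"
    using \<open>0 \<le> d\<close> by (auto simp: min_def)
  with insert show ?case
    by auto
qed simp

lemma sum_min_ge_double:
  fixes a :: "'a \<Rightarrow> real"
  assumes "finite W" "0 \<le> d" "d \<le> 1/2" "\<forall>w\<in>W. 0 \<le> a w \<and> a w \<le> 1 - d" "sum a W = 1"
  shows "2 * d \<le> (\<Sum>w\<in>W. min (a w) d)"
proof (cases "\<forall>w\<in>W. a w \<le> d")
  case True
  then have "(\<Sum>w\<in>W. min (a w) d) = sum a W"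
    by (intro sum.cong) auto
  with assms show ?thesis
    by simp
next
  case False
  then obtain u where u: "u \<in> W" "d < a u"
    by auto
  have "sum a W = a u + sum a (W - {u})"
    using u assms(1) by (simp add: sum.remove)
  then have "d \<le> min (sum a (W - {u})) d"
    using assms(4,5) u by auto
  also have "\<dots> \<le> (\<Sum>w\<in>W - {u}. min (a w) d)"
    using assms by (intro min_sum_le_sum_min) auto
  finally show ?thesis
    using u assms(1) by (simp add: sum.remove)
qed

lemma concave_on_subset: "concave_on T f \<Longrightarrow> S \<subseteq> T \<Longrightarrow> convex S \<Longrightarrow> concave_on S f"
  unfolding concave_on_def by (rule convex_on_subset)

lemma concave_on_min:
  assumes "concave_on S f" "concave_on S g"
  shows "concave_on S (\<lambda>x. min (f x) (g x))"
  unfolding concave_on_iff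
proof (intro conjI ballI allI impI)
  show "convex S"
    using assms(1) by (rule concave_on_imp_convex)
  fix x y and u v :: real
  assume xy: "x \<in> S" "y \<in> S" and uv: "0 \<le> u" "0 \<le> v" "u + v = 1"
  have "u * min (f x) (g x) + v * min (f y) (g y) \<le> u * f x + v * f y"
       "u * min (f x) (g x) + v * min (f y) (g y) \<le> u * g x + v * g y"
    using uv by (intro add_mono mult_left_mono; simp)+
  moreover have "u * f x + v * f y \<le> f (u *\<^sub>R x + v *\<^sub>R y)"
                "u * g x + v * g y \<le> g (u *\<^sub>R x + v *\<^sub>R y)"
    using assms xy uv by (auto simp: concave_on_iff)
  ultimately show "u * min (f x) (g x) + v * min (f y) (g y)
      \<le> min (f (u *\<^sub>R x + v *\<^sub>R y)) (g (u *\<^sub>R x + v *\<^sub>R y))"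
    by linarith
qed

lemma concave_on_min_mult_one_minus:
  fixes c :: real
  assumes "0 \<le> c"
  shows "concave_on {0..1} (\<lambda>x. min x c * (1 - x))"
  using assms
  by (intro concave_on_mul concave_on_min concave_on_diff)
     (auto simp: monotone_on_def concave_on_ident concave_on_const convex_on_ident)

lemma concave_chord_from_zero:
  fixes g :: "real \<Rightarrow> real"
  assumes "concave_on {0..b} g" "0 \<le> g 0" "0 \<le> x" "x \<le> b"
  shows "x * g b \<le> b * g x"
proof (cases "b = 0")
  case False
  then have "0 < b"
    using assms(3,4) by simp
  have "(g b - g 0) / (b - 0) * (x - 0) + g 0 \<le> g x"
    using assms by (intro concave_onD_Icc') auto
  moreover have "x * g 0 \<le> b * g 0"
    using assms by (intro mult_right_mono) auto
  ultimately show ?thesis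
    using \<open>0 < b\<close> by (simp add: field_simps)
qed (use assms in simp)

lemma sum_concave_ge_two_point:
  fixes g :: "real \<Rightarrow> real" and a :: "'a \<Rightarrow> real"
  assumes g: "concave_on {0..1 - d} g" "0 \<le> g 0"
    and d: "0 < d" "d < 1/2"
    and a: "finite W" "\<forall>w\<in>W. 0 \<le> a w \<and> a w \<le> 1 - d" "sum a W = 1"
  shows "g d + g (1 - d) \<le> (\<Sum>w\<in>W. g (a w))"
proof -
  define s\<^sub>1 where "s\<^sub>1 = g d / d"
  define s\<^sub>2 where "s\<^sub>2 = (g (1 - d) - g d) / (1 - 2 * d)"
  have "d * g (1 - d) \<le> (1 - d) * g d"
    using concave_chord_from_zero [OF g, of d] d by simp
  then have slopes: "s\<^sub>2 \<le> s\<^sub>1"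
    using d by (simp add: s\<^sub>1_def s\<^sub>2_def field_simps)
  have minorant: "s\<^sub>1 * min x d + s\<^sub>2 * (x - min x d) \<le> g x" if "0 \<le> x" "x \<le> 1 - d" for x
  proof (cases "x \<le> d")
    case True
    have "x * g d \<le> d * g x"
      using True that d
      by (intro concave_chord_from_zero [OF concave_on_subset [OF g(1)] g(2)]) auto
    then show ?thesis
      using True d by (simp add: s\<^sub>1_def field_simps)
  next
    case False
    have "(g (1 - d) - g d) / (1 - d - d) * (x - d) + g d \<le> g x"
      using False that d
      by (intro concave_onD_Icc' [OF concave_on_subset [OF g(1)]]) auto
    then show ?thesis
      using False d by (simp add: s\<^sub>1_def s\<^sub>2_def)
  qed
  define m where "m = (\<Sum>w\<in>W. min (a w) d)"
  have "2 * d \<le> m"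
    unfolding m_def using a d by (intro sum_min_ge_double) auto
  have "g d + g (1 - d) = s\<^sub>2 * (1 - 2 * d) + 2 * (s\<^sub>1 * d)"
    using d by (simp add: s\<^sub>1_def s\<^sub>2_def)
  also have "\<dots> = s\<^sub>2 + (s\<^sub>1 - s\<^sub>2) * (2 * d)"
    by (simp add: algebra_simps)
  also have "\<dots> \<le> s\<^sub>2 + (s\<^sub>1 - s\<^sub>2) * m"
    using slopes \<open>2 * d \<le> m\<close> by (intro add_left_mono mult_left_mono) auto
  also have "\<dots> = (\<Sum>w\<in>W. s\<^sub>1 * min (a w) d + s\<^sub>2 * (a w - min (a w) d))"
    using a(3)
    by (simp add: m_def sum.distrib sum_subtractf flip: sum_distrib_left) (simp add: algebra_simps)
  also have "\<dots> \<le> (\<Sum>w\<in>W. g (a w))"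
    using a minorant by (intro sum_mono) auto
  finally show ?thesis .
qed

definition min_kernel :: "real \<Rightarrow> real \<Rightarrow> real" where
  "min_kernel x y = min x y * (1 - x) * (1 - y)"

lemma min_kernel_commute: "min_kernel x y = min_kernel y x"
  by (simp add: min_kernel_def min.commute mult_ac)

lemma concave_on_min_kernel:
  assumes "0 \<le> c" "c \<le> 1"
  shows "concave_on {0..1} (\<lambda>x. min_kernel x c)"
proof -
  have "concave_on {0..1} (\<lambda>x. (1 - c) * (min x c * (1 - x)))"
    using assms by (intro concave_on_cmul concave_on_min_mult_one_minus) auto
  then show ?thesis
    by (simp add: min_kernel_def mult_ac)
qed

lemma sum_min_kernel_ge_two_point:
  fixes a :: "'a \<Rightarrow> real"
  assumes "0 < d" "d < 1/2"
    and "finite W" "\<forall>w\<in>W. 0 \<le> a w \<and> a w \<le> 1 - d" "sum a W = 1"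
    and "0 \<le> c" "c \<le> 1"
  shows "min_kernel d c + min_kernel (1 - d) c \<le> (\<Sum>w\<in>W. min_kernel (a w) c)"
proof (rule sum_concave_ge_two_point [OF _ _ assms(1-5)])
  show "concave_on {0..1 - d} (\<lambda>x. min_kernel x c)"
    using assms by (intro concave_on_subset [OF concave_on_min_kernel]) auto
  show "0 \<le> min_kernel 0 c"
    using assms by (simp add: min_kernel_def)
qed

theorem lemmaA7:
  fixes W :: "'w set" and P1 P2 :: "'w \<Rightarrow> real" and \<Delta> :: real
  assumes "finite W"
    and "0 \<le> \<Delta>"
    and "\<Delta> < 0.5"
    and "\<forall>w\<in>W. P1 w \<ge> 0" and "(\<Sum>w\<in>W. P1 w) = 1"
    and "\<forall>w\<in>W. P2 w \<ge> 0" and "(\<Sum>w\<in>W. P2 w) = 1"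
    and "\<forall>w\<in>W. P1 w \<le> 1 - \<Delta>"
    and "\<forall>w\<in>W. P2 w \<le> 1 - \<Delta>"
  shows "(\<Sum>w\<in>W. \<Sum>j\<in>W. min (P1 w) (P2 j) * (1 - P1 w) * (1 - P2 j))
           \<ge> \<Delta> * (1 - \<Delta>)^2 + 3 * \<Delta>^2 * (1 - \<Delta>)"
proof (cases "\<Delta> = 0")
  case True
  then show ?thesis
    using assms by (simp add: sum_nonneg)
next
  case False
  let ?K = min_kernel
  have \<Delta>: "0 < \<Delta>" "\<Delta> < 1/2"
    using False assms(2,3) by auto
  have P: "\<forall>w\<in>W. 0 \<le> P1 w \<and> P1 w \<le> 1 - \<Delta>" "\<forall>w\<in>W. 0 \<le> P2 w \<and> P2 w \<le> 1 - \<Delta>"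
    using assms by auto
  have "\<Delta> * (1 - \<Delta>)^2 + 3 * \<Delta>^2 * (1 - \<Delta>)
      = ?K \<Delta> \<Delta> + ?K (1 - \<Delta>) \<Delta> + (?K \<Delta> (1 - \<Delta>) + ?K (1 - \<Delta>) (1 - \<Delta>))"
    using \<Delta> by (simp add: min_kernel_def min_def power2_eq_square algebra_simps)
  also have "\<dots> \<le> (\<Sum>w\<in>W. ?K (P1 w) \<Delta>) + (\<Sum>w\<in>W. ?K (P1 w) (1 - \<Delta>))"
    using \<Delta> P(1) assms(1,5)
    by (intro add_mono sum_min_kernel_ge_two_point) auto
  also have "\<dots> = (\<Sum>w\<in>W. ?K \<Delta> (P1 w) + ?K (1 - \<Delta>) (P1 w))"
    by (simp add: sum.distrib min_kernel_commute)
  also have "\<dots> \<le> (\<Sum>w\<in>W. \<Sum>j\<in>W. ?K (P2 j) (P1 w))"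
    using \<Delta> P assms(1,7)
    by (intro sum_mono sum_min_kernel_ge_two_point) auto
  also have "\<dots> = (\<Sum>w\<in>W. \<Sum>j\<in>W. min (P1 w) (P2 j) * (1 - P1 w) * (1 - P2 j))"
    by (simp add: min_kernel_def min.commute mult_ac)
  finally show ?thesis .
qed

end
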